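(* Let $n\ge3$. For real coefficients $c^{lm}_{ij}$ ($1\le i,j,l,m\le n$) with $c^{lm}_{ij}=c^{lm}_{ji}$, consider the homogeneous linear system in the $n^2$ unknowns $b^k_s$ ($1\le k,s\le n$) consisting of the equations $$(c^{lk}_{ij}-c^{li}_{kj})b^k_p+(c^{lp}_{kj}-c^{lk}_{pj})b^k_i+(c^{ki}_{pj}-c^{kp}_{ij})b^l_k+(c^{lp}_{ik}-c^{li}_{pk})b^k_j=0$$ for all $1\le i<p\le n$ and all $1\le j,l\le n$ (summation over the repeated index $k$ from $1$ to $n$). Then there exists a choice of such coefficients $c^{lm}_{ij}$, satisfying in addition that $c^{lp}_{ij}\neq0$ only if the set $\{i,j,l,p\}$ consists of exactly two distinct numbers, for which this system has an $n^2\times n^2$ nondegenerate minor; in particular, for this choice its only solution is $b^k_s=0$ for all $k,s$.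
   Context: This system is the compatibility condition $\partial_p(\mathcal{L}_{V_1}\Gamma_1)^l_{ij}=\partial_i(\mathcal{L}_{V_1}\Gamma_1)^l_{pj}$ for a linear vector field $V_1^k=\sum_s b^k_sx^s$ and a connection with Christoffel symbols $\Gamma^l_{ij}=\sum_m c^{lm}_{ij}x^m$, but the claim is purely about the stated linear system. *)

theory Defs
  imports "Jordan_Normal_Form.Determinant"
begin

text \<open>Indices are 0-based: the paper's index range 1..n becomes 0..n-1.
  c l m i j stands for c^{lm}_{ij}, and b k s stands for b^k_s.\<close>

definition eq_lhs ::
  "nat \<Rightarrow> (nat \<Rightarrow> nat \<Rightarrow> nat \<Rightarrow> nat \<Rightarrow> real) \<Rightarrow> (nat \<Rightarrow> nat \<Rightarrow> real)
   \<Rightarrow> nat \<Rightarrow> nat \<Rightarrow> nat \<Rightarrow> nat \<Rightarrow> real" where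
  "eq_lhs n c b i p j l =
     (\<Sum>k<n. (c l k i j - c l i k j) * b k p
            + (c l p k j - c l k p j) * b k i
            + (c k i p j - c k p i j) * b l k
            + (c l p i k - c l i p k) * b k j)"

definition eq_rows :: "nat \<Rightarrow> (nat \<times> nat \<times> nat \<times> nat) set" where
  "eq_rows n = {(i, p, j, l). i < p \<and> p < n \<and> j < n \<and> l < n}"

definition sys_coeff ::
  "nat \<Rightarrow> (nat \<Rightarrow> nat \<Rightarrow> nat \<Rightarrow> nat \<Rightarrow> real) \<Rightarrow> nat \<times> nat \<times> nat \<times> nat
   \<Rightarrow> nat \<Rightarrow> nat \<Rightarrow> real" where
  "sys_coeff n c r a s =
     (case r of (i, p, j, l) \<Rightarrow>
        eq_lhs n c (\<lambda>k t. if k = a \<and> t = s then 1 else 0) i p j l)"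

definition minor_mat ::
  "nat \<Rightarrow> (nat \<Rightarrow> nat \<Rightarrow> nat \<Rightarrow> nat \<Rightarrow> real) \<Rightarrow> (nat \<Rightarrow> nat \<times> nat \<times> nat \<times> nat)
   \<Rightarrow> real mat" where
  "minor_mat n c \<rho> = mat (n * n) (n * n) (\<lambda>(r, q). sys_coeff n c (\<rho> r) (q div n) (q mod n))"

end

theory Submission
  imports Defs
begin

text \<open>Take c^{lm}_{ll} = 1 for m \<noteq> l and all other coefficients zero. Then the equation
  (k, s, s, k) with k < s reads 2 b^k_s = 0, the equation (s, k, s, k) with s < k reads
  -2 b^k_s = 0, and (i, p, i, i) reads b^i_i + \<Sum>_{k \<noteq> i} b^k_p = 0, i.e. b^i_i + b^p_p = 0 once
  the off-diagonal unknowns vanish. Pairing b^k_k (k > 0) with (0, k, 0, 0) and b^0_0 with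
  (1, 2, 1, 1) selects n^2 distinct equations whose only common solution is b = 0, because
  2 b^0_0 = (b^0_0 + b^1_1) + (b^0_0 + b^2_2) - (b^1_1 + b^2_2); this is where n \<ge> 3 is used.
  A square system with only the trivial solution has a nonzero determinant.\<close>

definition row_lhs ::
  "nat \<Rightarrow> (nat \<Rightarrow> nat \<Rightarrow> nat \<Rightarrow> nat \<Rightarrow> real) \<Rightarrow> (nat \<Rightarrow> nat \<Rightarrow> real)
   \<Rightarrow> nat \<times> nat \<times> nat \<times> nat \<Rightarrow> real" where
  "row_lhs n c b r = (case r of (i, p, j, l) \<Rightarrow> eq_lhs n c b i p j l)"

lemma row_lhs_tuple [simp]: "row_lhs n c b (i, p, j, l) = eq_lhs n c b i p j l"
  by (simp add: row_lhs_def)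

lemma eq_lhs_linear:
  "eq_lhs n c (\<lambda>k t. \<Sum>x\<in>X. w x * g x k t) i p j l = (\<Sum>x\<in>X. w x * eq_lhs n c (g x) i p j l)"
  unfolding eq_lhs_def sum_distrib_left
  by (subst sum.swap) (simp add: sum_distrib_left sum.distrib ring_distribs mult.left_commute)

lemma row_lhs_linear:
  "row_lhs n c (\<lambda>k t. \<Sum>x\<in>X. w x * g x k t) r = (\<Sum>x\<in>X. w x * row_lhs n c (g x) r)"
  by (cases r) (simp add: eq_lhs_linear)

lemma row_lhs_cong:
  assumes "r \<in> eq_rows n" and "\<And>k t. k < n \<Longrightarrow> t < n \<Longrightarrow> b k t = b' k t"
  shows "row_lhs n c b r = row_lhs n c b' r"
  using assms unfolding eq_rows_def row_lhs_def eq_lhs_def by (auto intro!: sum.cong)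

lemma sys_coeff_eq_row_lhs:
  "sys_coeff n c r a s = row_lhs n c (\<lambda>k t. if k = a \<and> t = s then 1 else 0) r"
  by (simp add: sys_coeff_def row_lhs_def)

lemma mult_add_less_square:
  fixes k t n :: nat
  assumes "k < n" "t < n"
  shows "k * n + t < n * n"
proof -
  have "k * n + t < Suc k * n" using assms(2) by simp
  also have "\<dots> \<le> n * n" using assms(1) by (intro mult_le_mono1) simp
  finally show ?thesis .
qed

lemma minor_mat_mult_vec:
  assumes "r < n * n" "\<rho> r \<in> eq_rows n" "v \<in> carrier_vec (n * n)"
  shows "(minor_mat n c \<rho> *\<^sub>v v) $ r = row_lhs n c (\<lambda>k t. v $ (k * n + t)) (\<rho> r)"
proof -
  have unit_sum: "(\<Sum>q<n * n. v $ q * (if k = q div n \<and> t = q mod n then 1 else 0)) = v $ (k * n + t)"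
    if "k < n" "t < n" for k t
  proof -
    have "v $ q * (if k = q div n \<and> t = q mod n then 1 else 0) = (if q = k * n + t then v $ q else 0)"
      for q using that by auto
    then show ?thesis using mult_add_less_square[OF that] by simp
  qed
  have "(minor_mat n c \<rho> *\<^sub>v v) $ r
      = (\<Sum>q<n * n. v $ q * sys_coeff n c (\<rho> r) (q div n) (q mod n))"
    using assms by (simp add: minor_mat_def scalar_prod_def atLeast0LessThan mult.commute)
  also have "\<dots> = row_lhs n c (\<lambda>k t. \<Sum>q<n * n. v $ q * (if k = q div n \<and> t = q mod n then 1 else 0)) (\<rho> r)"
    by (simp add: sys_coeff_eq_row_lhs row_lhs_linear)
  also have "\<dots> = row_lhs n c (\<lambda>k t. v $ (k * n + t)) (\<rho> r)"
    using assms(2) by (rule row_lhs_cong) (rule unit_sum)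
  finally show ?thesis .
qed

lemma det_minor_mat_nonzero:
  assumes rows: "\<And>r. r < n * n \<Longrightarrow> \<rho> r \<in> eq_rows n"
    and forces_zero: "\<And>b k t. \<forall>r<n * n. row_lhs n c b (\<rho> r) = 0 \<Longrightarrow> k < n \<Longrightarrow> t < n \<Longrightarrow> b k t = 0"
  shows "det (minor_mat n c \<rho>) \<noteq> 0"
proof
  have "minor_mat n c \<rho> \<in> carrier_mat (n * n) (n * n)"
    by (simp add: minor_mat_def)
  moreover assume "det (minor_mat n c \<rho>) = 0"
  ultimately obtain v where v: "v \<in> carrier_vec (n * n)" "v \<noteq> 0\<^sub>v (n * n)"
    and kernel: "minor_mat n c \<rho> *\<^sub>v v = 0\<^sub>v (n * n)"
    using det_0_iff_vec_prod_zero by blast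
  have rows_vanish: "row_lhs n c (\<lambda>k t. v $ (k * n + t)) (\<rho> r) = 0" if "r < n * n" for r
    using minor_mat_mult_vec[of r n \<rho> v c] rows[OF that] v(1) kernel that by simp
  have "v $ q = 0" if "q < n * n" for q
  proof -
    have "0 < n" using that by (cases n) auto
    then show ?thesis
      using forces_zero[of "\<lambda>k t. v $ (k * n + t)" "q div n" "q mod n"] rows_vanish that
      by (simp add: less_mult_imp_div_less)
  qed
  then have "v = 0\<^sub>v (n * n)"
    using v(1) by (intro eq_vecI) auto
  with v(2) show False ..
qed

definition c_diag :: "nat \<Rightarrow> nat \<Rightarrow> nat \<Rightarrow> nat \<Rightarrow> real" where
  "c_diag l m i j = of_bool (i = l \<and> j = l \<and> m \<noteq> l)"

lemma c_diag_sym: "c_diag l m i j = c_diag l m j i"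
  by (auto simp: c_diag_def)

lemma card_c_diag_support: "c_diag l p i j \<noteq> 0 \<Longrightarrow> card {i, j, l, p} = 2"
  by (simp add: c_diag_def)

lemma eq_lhs_c_diag_upper:
  assumes "k < s" "s < n"
  shows "eq_lhs n c_diag b k s s k = 2 * b k s"
proof -
  have "eq_lhs n c_diag b k s s k = (\<Sum>m<n. (if m = s then b k s else 0) + (if m = k then b k s else 0))"
    unfolding eq_lhs_def c_diag_def using assms by (intro sum.cong) auto
  then show ?thesis using assms by (simp add: sum.distrib)
qed

lemma eq_lhs_c_diag_lower:
  assumes "s < k" "k < n"
  shows "eq_lhs n c_diag b s k s k = - 2 * b k s"
proof -
  have "eq_lhs n c_diag b s k s k = - (\<Sum>m<n. (if m = s then b k s else 0) + (if m = k then b k s else 0))"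
    unfolding eq_lhs_def c_diag_def sum_negf[symmetric] using assms by (intro sum.cong) auto
  then show ?thesis using assms by (simp add: sum.distrib)
qed

lemma eq_lhs_c_diag_column_sum:
  assumes "i < p" "p < n"
  shows "eq_lhs n c_diag b i p i i = b i i + (\<Sum>k\<in>{..<n} - {i}. b k p)"
proof -
  have "eq_lhs n c_diag b i p i i = (\<Sum>k<n. (if k = i then b i i else 0) + (if k = i then 0 else b k p))"
    unfolding eq_lhs_def c_diag_def using assms by (intro sum.cong) auto
  then show ?thesis using assms by (simp add: sum.distrib sum.If_cases Diff_eq)
qed

definition pivot_row :: "nat \<Rightarrow> nat \<Rightarrow> nat \<times> nat \<times> nat \<times> nat" where
  "pivot_row k s =
     (if k < s then (k, s, s, k) else if s < k then (s, k, s, k)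
      else if k = 0 then (1, 2, 1, 1) else (0, k, 0, 0))"

lemma pivot_row_in_eq_rows: "3 \<le> n \<Longrightarrow> k < n \<Longrightarrow> s < n \<Longrightarrow> pivot_row k s \<in> eq_rows n"
  by (auto simp: pivot_row_def eq_rows_def)

lemma pivot_row_inject: "pivot_row k s = pivot_row k' s' \<Longrightarrow> k = k' \<and> s = s'"
  by (auto simp: pivot_row_def split: if_splits)

lemma c_diag_pivot_rows_force_zero:
  assumes "3 \<le> n" and pivots: "\<forall>k<n. \<forall>s<n. row_lhs n c_diag b (pivot_row k s) = 0"
    and "k < n" "s < n"
  shows "b k s = 0"
proof -
  have off_diag: "b k s = 0" if "k < n" "s < n" "k \<noteq> s" for k s
    using pivots[rule_format, OF that(1,2)] eq_lhs_c_diag_upper[of k s n b] eq_lhs_c_diag_lower[of s k n b] that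
    by (cases "k < s") (auto simp: pivot_row_def)
  have diag_pair: "b i i + b p p = 0" if "i < p" "p < n" "row_lhs n c_diag b (i, p, i, i) = 0" for i p
  proof -
    have "(\<Sum>k\<in>{..<n} - {i}. b k p) = (\<Sum>k\<in>{..<n} - {i}. if k = p then b p p else 0)"
      using off_diag that(2) by (intro sum.cong) auto
    also have "\<dots> = b p p" using that by simp
    finally show ?thesis using that eq_lhs_c_diag_column_sum[OF that(1,2)] by simp
  qed
  have diag_0: "b 0 0 + b t t = 0" if "0 < t" "t < n" for t
    using diag_pair[OF that] pivots[rule_format, of t t] that by (simp add: pivot_row_def)
  have "b 1 1 + b 2 2 = 0"
    using diag_pair[of 1 2] pivots[rule_format, of 0 0] \<open>3 \<le> n\<close> by (simp add: pivot_row_def)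
  with diag_0[of 1] diag_0[of 2] \<open>3 \<le> n\<close> have "b 0 0 = 0" by simp
  with diag_0[of k] off_diag[OF \<open>k < n\<close> \<open>s < n\<close>] \<open>k < n\<close> show ?thesis
    by (cases "k = s"; cases "k = 0") simp_all
qed

lemma c_diag_solution_zero:
  assumes "3 \<le> n" and solves: "\<forall>(i, p, j, l) \<in> eq_rows n. eq_lhs n c_diag b i p j l = 0"
    and "k < n" "s < n"
  shows "b k s = 0"
proof (rule c_diag_pivot_rows_force_zero[OF assms(1) _ assms(3,4)])
  have "row_lhs n c_diag b r = 0" if "r \<in> eq_rows n" for r
    using solves that unfolding row_lhs_def by (cases r) fastforce
  then show "\<forall>k<n. \<forall>s<n. row_lhs n c_diag b (pivot_row k s) = 0"
    using pivot_row_in_eq_rows[OF assms(1)] by blast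
qed

theorem mainTheorem3:
  fixes n :: nat
  assumes "n \<ge> 3"
  shows "\<exists>c :: nat \<Rightarrow> nat \<Rightarrow> nat \<Rightarrow> nat \<Rightarrow> real.
    (\<forall>l<n. \<forall>m<n. \<forall>i<n. \<forall>j<n. c l m i j = c l m j i) \<and>
    (\<forall>l<n. \<forall>p<n. \<forall>i<n. \<forall>j<n. c l p i j \<noteq> 0 \<longrightarrow> card {i, j, l, p} = 2) \<and>
    (\<exists>\<rho>. inj_on \<rho> {..<n * n} \<and> \<rho> ` {..<n * n} \<subseteq> eq_rows n \<and>
         det (minor_mat n c \<rho>) \<noteq> 0) \<and>
    (\<forall>b :: nat \<Rightarrow> nat \<Rightarrow> real.
       (\<forall>(i, p, j, l) \<in> eq_rows n. eq_lhs n c b i p j l = 0) \<longrightarrow>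
       (\<forall>k<n. \<forall>s<n. b k s = 0))"
proof -
  define \<rho> where "\<rho> q = pivot_row (q div n) (q mod n)" for q
  have rows: "\<rho> q \<in> eq_rows n" if "q < n * n" for q
    using pivot_row_in_eq_rows[OF assms] that assms
    by (simp add: \<rho>_def less_mult_imp_div_less)
  have "inj_on \<rho> {..<n * n}"
    by (rule inj_onI) (metis \<rho>_def pivot_row_inject div_mult_mod_eq)
  moreover have "det (minor_mat n c_diag \<rho>) \<noteq> 0"
  proof (rule det_minor_mat_nonzero[OF rows])
    fix b k t
    assume "\<forall>r<n * n. row_lhs n c_diag b (\<rho> r) = 0" "k < n" "t < n"
    moreover have "\<rho> (k * n + s) = pivot_row k s" if "s < n" for k s
      using that by (simp add: \<rho>_def)
    ultimately show "b k t = 0"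
      using c_diag_pivot_rows_force_zero[OF assms] mult_add_less_square by metis
  qed
  moreover note c_diag_solution_zero[OF assms]
  ultimately show ?thesis
    using rows card_c_diag_support
    by (intro exI[of _ c_diag] conjI exI[of _ \<rho>]) (auto simp: c_diag_sym)
qed

end
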